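(* Let $N$ be a finitely generated, semipositive, cancellative, integral binoid. Let $G$ be the group of differences of the monoid $N^\bullet$, fix an isomorphism $G\cong\mathbb Z^m\times T$ with $T$ the finite torsion subgroup, let $\pi:G\to\mathbb Z^m$ be the projection, $F=\pi(N^\bullet)\cup\{\infty\}$ and $F\wedge T^\infty=(F^\bullet\times T)\cup\{\infty\}$. Then $N\subseteq F\wedge T^\infty\subseteq G\cup\{\infty\}$ (so $F\wedge T^\infty$ is birational over $N$), and $F\wedge T^\infty$ is finitely generated as an $N$-set (via addition).
   Context: A binoid $(N,+,0,\infty)$ is a commutative monoid $(N,+,0)$ with an element $\infty$ satisfying $a+\infty=\infty$ for all $a\in N$. Write $N^\bullet=N\setminus\{\infty\}$, $N^\times$ for the group of units of $N$ and $N_+=N\setminus N^\times$. $N$ is finitely generated if it is finitely generated as a monoid; semipositive if $N\neq\{\infty\}$ and $N^\times$ is finite. $N$ is integral if $N\neq\{\infty\}$ and $a+b=\infty$ implies $a=\infty$ or $b=\infty$. $N$ is cancellative if $a+b=a+c\neq\infty$ implies $b=c$. For an integral cancellative $N$, $N^\bullet$ embeds into its group of differences $G$, and $G\cup\{\infty\}$ is a binoid containing $N$. An $N$-set $M$ (here a binoid containing $N$, with $N$ acting by addition) is finitely generated if there are $m_1,\dots,m_r\in M$ with $M=\bigcup_j(N+m_j)$. *)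

theory Defs
  imports Main
begin

definition binoid :: "'a set \<Rightarrow> ('a \<Rightarrow> 'a \<Rightarrow> 'a) \<Rightarrow> 'a \<Rightarrow> 'a \<Rightarrow> bool" where
  "binoid N add z oo \<longleftrightarrow>
     z \<in> N \<and> oo \<in> N \<and>
     (\<forall>a\<in>N. \<forall>b\<in>N. add a b \<in> N) \<and>
     (\<forall>a\<in>N. \<forall>b\<in>N. \<forall>c\<in>N. add (add a b) c = add a (add b c)) \<and>
     (\<forall>a\<in>N. \<forall>b\<in>N. add a b = add b a) \<and>
     (\<forall>a\<in>N. add a z = a) \<and>
     (\<forall>a\<in>N. add a oo = oo)"

inductive_set gen_monoid :: "('a \<Rightarrow> 'a \<Rightarrow> 'a) \<Rightarrow> 'a \<Rightarrow> 'a set \<Rightarrow> 'a set"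
  for add :: "'a \<Rightarrow> 'a \<Rightarrow> 'a" and z :: 'a and A :: "'a set" where
  gen_zero: "z \<in> gen_monoid add z A"
| gen_base: "a \<in> A \<Longrightarrow> a \<in> gen_monoid add z A"
| gen_add: "a \<in> gen_monoid add z A \<Longrightarrow> b \<in> gen_monoid add z A \<Longrightarrow> add a b \<in> gen_monoid add z A"

definition binoid_fin_gen :: "'a set \<Rightarrow> ('a \<Rightarrow> 'a \<Rightarrow> 'a) \<Rightarrow> 'a \<Rightarrow> bool" where
  "binoid_fin_gen N add z \<longleftrightarrow> (\<exists>A. finite A \<and> A \<subseteq> N \<and> N = gen_monoid add z A)"

definition binoid_units :: "'a set \<Rightarrow> ('a \<Rightarrow> 'a \<Rightarrow> 'a) \<Rightarrow> 'a \<Rightarrow> 'a set" where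
  "binoid_units N add z = {a \<in> N. \<exists>b\<in>N. add a b = z}"

definition semipositive :: "'a set \<Rightarrow> ('a \<Rightarrow> 'a \<Rightarrow> 'a) \<Rightarrow> 'a \<Rightarrow> 'a \<Rightarrow> bool" where
  "semipositive N add z oo \<longleftrightarrow> N \<noteq> {oo} \<and> finite (binoid_units N add z)"

definition integral_binoid :: "'a set \<Rightarrow> ('a \<Rightarrow> 'a \<Rightarrow> 'a) \<Rightarrow> 'a \<Rightarrow> bool" where
  "integral_binoid N add oo \<longleftrightarrow> N \<noteq> {oo} \<and>
     (\<forall>a\<in>N. \<forall>b\<in>N. add a b = oo \<longrightarrow> a = oo \<or> b = oo)"

definition cancellative_binoid :: "'a set \<Rightarrow> ('a \<Rightarrow> 'a \<Rightarrow> 'a) \<Rightarrow> 'a \<Rightarrow> bool" where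
  "cancellative_binoid N add oo \<longleftrightarrow>
     (\<forall>a\<in>N. \<forall>b\<in>N. \<forall>c\<in>N. add a b = add a c \<and> add a b \<noteq> oo \<longrightarrow> b = c)"

text \<open>\<iota> exhibits the abelian group (the whole type 'g) as the group of differences of
  the monoid N-bullet = N - {oo}: an injective monoid homomorphism N-bullet \<rightarrow> 'g such that every
  element of 'g is a difference of images.\<close>
definition group_of_differences ::
  "'a set \<Rightarrow> ('a \<Rightarrow> 'a \<Rightarrow> 'a) \<Rightarrow> 'a \<Rightarrow> 'a \<Rightarrow> ('a \<Rightarrow> 'g::ab_group_add) \<Rightarrow> bool" where
  "group_of_differences N add z oo \<iota> \<longleftrightarrow>
     \<iota> z = 0 \<and>
     (\<forall>a\<in>N - {oo}. \<forall>b\<in>N - {oo}. \<iota> (add a b) = \<iota> a + \<iota> b) \<and>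
     inj_on \<iota> (N - {oo}) \<and>
     (\<forall>g. \<exists>a\<in>N - {oo}. \<exists>b\<in>N - {oo}. g = \<iota> a - \<iota> b)"

text \<open>\<int>^m, represented as integer sequences vanishing from index m on.\<close>
definition Zvec :: "nat \<Rightarrow> (nat \<Rightarrow> int) set" where
  "Zvec m = {v. \<forall>i\<ge>m. v i = 0}"

definition iso_Zm_times :: "nat \<Rightarrow> ('g::ab_group_add \<Rightarrow> (nat \<Rightarrow> int) \<times> 't::ab_group_add) \<Rightarrow> bool" where
  "iso_Zm_times m \<phi> \<longleftrightarrow>
     (\<forall>x y. \<phi> (x + y) = ((\<lambda>i. fst (\<phi> x) i + fst (\<phi> y) i), snd (\<phi> x) + snd (\<phi> y))) \<and>
     bij_betw \<phi> UNIV (Zvec m \<times> UNIV)"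

text \<open>G \<union> {\<infinity>} is modelled as 'g option, with None = \<infinity>.\<close>
fun oplus :: "'g::ab_group_add option \<Rightarrow> 'g option \<Rightarrow> 'g option" where
  "oplus (Some a) (Some b) = Some (a + b)"
| "oplus _ _ = None"

definition emb :: "'a \<Rightarrow> ('a \<Rightarrow> 'g) \<Rightarrow> 'a \<Rightarrow> 'g option" where
  "emb oo \<iota> x = (if x = oo then None else Some (\<iota> x))"

text \<open>F \<and> T^\<infinity> = (F-bullet \<times> T) \<union> {\<infinity>} with F = \<pi>(N-bullet) \<union> {\<infinity>}, viewed inside G \<union> {\<infinity>}
  via \<phi>\<inverse>.\<close>
definition FT :: "'a set \<Rightarrow> 'a \<Rightarrow> ('a \<Rightarrow> 'g) \<Rightarrow> ('g \<Rightarrow> (nat \<Rightarrow> int) \<times> 't) \<Rightarrow> 'g option set" where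
  "FT N oo \<iota> \<phi> =
     insert None (Some ` {g. \<phi> g \<in> ((\<lambda>a. fst (\<phi> (\<iota> a))) ` (N - {oo})) \<times> UNIV})"

definition fin_gen_Nset :: "'a set \<Rightarrow> 'a \<Rightarrow> ('a \<Rightarrow> 'g::ab_group_add) \<Rightarrow> 'g option set \<Rightarrow> bool" where
  "fin_gen_Nset N oo \<iota> M \<longleftrightarrow>
     (\<exists>S. finite S \<and> S \<subseteq> M \<and> M = (\<Union>s\<in>S. (\<lambda>n. oplus (emb oo \<iota> n) s) ` N))"

end

theory Submission
  imports Defs
begin

text \<open>The kernel of \<pi> is a copy of the finite group T, and two elements of G have the same
  image under \<pi> exactly when they differ by an element of this kernel. Hence
  F \<and> T^\<infinity> is the union of the finitely many translates N + t, t \<in> ker \<pi>.\<close>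

definition proj_kernel :: "('g \<Rightarrow> (nat \<Rightarrow> int) \<times> 't) \<Rightarrow> 'g set" where
  "proj_kernel \<phi> = {h. fst (\<phi> h) = (\<lambda>i. 0)}"

lemma iso_Zm_times_fst_add:
  assumes "iso_Zm_times m \<phi>"
  shows "fst (\<phi> (x + y)) = (\<lambda>i. fst (\<phi> x) i + fst (\<phi> y) i)"
  using assms unfolding iso_Zm_times_def by simp

lemma iso_Zm_times_fst_eq_iff:
  assumes "iso_Zm_times m \<phi>"
  shows "fst (\<phi> g) = fst (\<phi> h) \<longleftrightarrow> g - h \<in> proj_kernel \<phi>"
proof -
  have "fst (\<phi> g) = (\<lambda>i. fst (\<phi> (g - h)) i + fst (\<phi> h) i)"
    using iso_Zm_times_fst_add[OF assms, of "g - h" h] by simp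
  then show ?thesis
    unfolding proj_kernel_def by (auto simp: fun_eq_iff)
qed

lemma zero_in_proj_kernel:
  assumes "iso_Zm_times m \<phi>"
  shows "0 \<in> proj_kernel \<phi>"
  using iso_Zm_times_fst_eq_iff[OF assms, of 0 0] by simp

lemma finite_proj_kernel:
  fixes \<phi> :: "'g::ab_group_add \<Rightarrow> (nat \<Rightarrow> int) \<times> 't::{finite, ab_group_add}"
  assumes "iso_Zm_times m \<phi>"
  shows "finite (proj_kernel \<phi>)"
proof -
  have "\<phi> ` proj_kernel \<phi> \<subseteq> {\<lambda>i. 0} \<times> UNIV"
    by (simp add: image_subset_iff proj_kernel_def mem_Times_iff)
  then have "finite (\<phi> ` proj_kernel \<phi>)"
    by (rule finite_subset) simp
  moreover have "inj \<phi>"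
    using assms unfolding iso_Zm_times_def bij_betw_def by simp
  ultimately show ?thesis
    by (meson finite_imageD inj_on_subset subset_UNIV)
qed

lemma binoid_zero_ne_absorbing:
  assumes "binoid N add z oo" and "semipositive N add z oo"
  shows "z \<noteq> oo"
proof
  assume "z = oo"
  with assms(1) have "\<forall>a\<in>N. a = oo"
    unfolding binoid_def by metis
  moreover have "oo \<in> N"
    using assms(1) unfolding binoid_def by simp
  ultimately show False
    using assms(2) unfolding semipositive_def by blast
qed

lemma emb_image_subset_FT: "emb oo \<iota> ` N \<subseteq> FT N oo \<iota> \<phi>"
  unfolding emb_def FT_def by (auto simp: mem_Times_iff)

lemma FT_eq_translates_by_proj_kernel:
  assumes "iso_Zm_times m \<phi>" and "oo \<in> N"
  shows "FT N oo \<iota> \<phi> = (\<Union>s\<in>Some ` proj_kernel \<phi>. (\<lambda>n. oplus (emb oo \<iota> n) s) ` N)"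
    (is "_ = ?U")
proof
  show "FT N oo \<iota> \<phi> \<subseteq> ?U"
  proof
    fix x assume x: "x \<in> FT N oo \<iota> \<phi>"
    show "x \<in> ?U"
    proof (cases x)
      case None
      then have "x = oplus (emb oo \<iota> oo) (Some 0)"
        by (simp add: emb_def)
      then show ?thesis
        using zero_in_proj_kernel[OF assms(1)] assms(2) by blast
    next
      case (Some g)
      then obtain a where a: "a \<in> N" "a \<noteq> oo" "fst (\<phi> g) = fst (\<phi> (\<iota> a))"
        using x unfolding FT_def by (auto simp: mem_Times_iff)
      then have "g - \<iota> a \<in> proj_kernel \<phi>"
        using iso_Zm_times_fst_eq_iff[OF assms(1)] by blast
      moreover have "x = oplus (emb oo \<iota> a) (Some (g - \<iota> a))"
        using Some a by (simp add: emb_def)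
      ultimately show ?thesis
        using a(1) by blast
    qed
  qed
  show "?U \<subseteq> FT N oo \<iota> \<phi>"
  proof clarify
    fix h n assume h: "h \<in> proj_kernel \<phi>" and n: "n \<in> N"
    show "oplus (emb oo \<iota> n) (Some h) \<in> FT N oo \<iota> \<phi>"
    proof (cases "n = oo")
      case True
      then show ?thesis by (simp add: emb_def FT_def)
    next
      case False
      have "fst (\<phi> (\<iota> n + h)) = fst (\<phi> (\<iota> n))"
        using h iso_Zm_times_fst_eq_iff[OF assms(1)] by simp
      then show ?thesis
        using False n unfolding FT_def by (auto simp: emb_def mem_Times_iff image_iff)
    qed
  qed
qed

theorem mainTheorem5:
  fixes N :: "'a set" and add :: "'a \<Rightarrow> 'a \<Rightarrow> 'a" and z oo :: 'a
    and \<iota> :: "'a \<Rightarrow> 'g::ab_group_add"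
    and m :: nat and \<phi> :: "'g \<Rightarrow> (nat \<Rightarrow> int) \<times> ('t::{finite, ab_group_add})"
  assumes "binoid N add z oo"
    and "binoid_fin_gen N add z"
    and "semipositive N add z oo"
    and "cancellative_binoid N add oo"
    and "integral_binoid N add oo"
    and "group_of_differences N add z oo \<iota>"
    and "iso_Zm_times m \<phi>"
  shows "emb oo \<iota> ` N \<subseteq> FT N oo \<iota> \<phi> \<and> FT N oo \<iota> \<phi> \<subseteq> UNIV
         \<and> fin_gen_Nset N oo \<iota> (FT N oo \<iota> \<phi>)"
proof -
  have "z \<in> N" "oo \<in> N"
    using assms(1) unfolding binoid_def by auto
  have "z \<noteq> oo"
    using binoid_zero_ne_absorbing assms(1,3) .
  have "\<iota> z = 0"
    using assms(6) unfolding group_of_differences_def by simp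
  note FT_eq = FT_eq_translates_by_proj_kernel[OF assms(7) \<open>oo \<in> N\<close>, of \<iota>]
  have "Some ` proj_kernel \<phi> \<subseteq> FT N oo \<iota> \<phi>"
  proof
    fix s assume s: "s \<in> Some ` proj_kernel \<phi>"
    then have "s = oplus (emb oo \<iota> z) s"
      using \<open>z \<noteq> oo\<close> \<open>\<iota> z = 0\<close> by (auto simp: emb_def)
    with s show "s \<in> FT N oo \<iota> \<phi>"
      unfolding FT_eq using \<open>z \<in> N\<close> by blast
  qed
  moreover have "finite (Some ` proj_kernel \<phi>)"
    using finite_proj_kernel[OF assms(7)] by simp
  ultimately have "fin_gen_Nset N oo \<iota> (FT N oo \<iota> \<phi>)"
    unfolding fin_gen_Nset_def using FT_eq by blast
  with emb_image_subset_FT show ?thesis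
    by simp
qed

end
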